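(* Fix a positive integer $m$ and positive reals $r_1,\dots,r_m$, and let $r=\max_jr_j$. Then for every $\varepsilon>0$ there exist $\vec\mu\in\mathbb{R}^m_{>0}$ and $\vec\sigma\in\mathbb{R}^m_{\ge0}$ with $\sigma_j/\mu_j=r_j$ for all $j$, such that for every truthful mechanism $A$ there is a product distribution $F=F_1\times\cdots\times F_m$, with each $F_j$ having mean $\mu_j$ and standard deviation at most $\sigma_j$, satisfying \[\frac{\mathrm{OPT}(F)}{\mathrm{REV}(A;F)}\ge 1-\varepsilon+\ln(1+r^2).\] In particular $\mathrm{APX}(\vec\mu,\vec\sigma)\ge1-\varepsilon+\ln(1+r^2)$.
   Context: One buyer with additive valuation for $m$ items with values $\vec v=(v_1,\dots,v_m)\sim F$ on $\mathbb{R}^m_{\ge0}$. $\mathbb{F}_{\vec\mu,\vec\sigma}$ is the class of joint distributions whose $j$-th marginal has mean $\mu_j$ and standard deviation at most $\sigma_j$. A mechanism is a pair $(x,\pi)$ with $x:\mathbb{R}^m_{\ge0}\to[0,1]^m$, $\pi:\mathbb{R}^m_{\ge0}\to\mathbb{R}_{\ge0}$; it is truthful if $x(\vec v)\cdot\vec v-\pi(\vec v)\ge x(\vec w)\cdot\vec v-\pi(\vec w)$ and $x(\vec v)\cdot\vec v-\pi(\vec v)\ge0$ for all $\vec v,\vec w$. $\mathrm{REV}(A;F)=\mathbb{E}_{\vec v\sim F}[\pi(\vec v)]$, $\mathrm{OPT}(F)$ is the supremum of $\mathrm{REV}$ over truthful mechanisms, and $\mathrm{APX}(\vec\mu,\vec\sigma)=\inf_A\sup_{F\in\mathbb{F}_{\vec\mu,\vec\sigma}}\mathrm{OPT}(F)/\mathrm{REV}(A;F)$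 over truthful $A$ (zero denominators give $+\infty$). *)

theory Defs
  imports "HOL-Probability.Probability"
begin

type_synonym valuation = "nat \<Rightarrow> real"
type_synonym mechanism = "(valuation \<Rightarrow> valuation) \<times> (valuation \<Rightarrow> real)"

text \<open>Valuation vectors for items 0..m-1 (coordinates outside are irrelevant/undefined).\<close>
definition valdom :: "nat \<Rightarrow> valuation set" where
  "valdom m = PiE {..<m} (\<lambda>_. {0..})"

text \<open>A mechanism (x, pi): allocation in [0,1]^m, nonnegative payment,
  payment measurable (so that its expected value is meaningful).\<close>
definition is_mechanism :: "nat \<Rightarrow> mechanism \<Rightarrow> bool" where
  "is_mechanism m A \<longleftrightarrow>
     (\<forall>v\<in>valdom m. (\<forall>j<m. 0 \<le> fst A v j \<and> fst A v j \<le> 1) \<and> 0 \<le> snd A v)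
     \<and> snd A \<in> borel_measurable (Pi\<^sub>M {..<m} (\<lambda>_. borel))"

definition truthful :: "nat \<Rightarrow> mechanism \<Rightarrow> bool" where
  "truthful m A \<longleftrightarrow>
     (\<forall>v\<in>valdom m. \<forall>w\<in>valdom m.
        (\<Sum>j<m. fst A v j * v j) - snd A v \<ge> (\<Sum>j<m. fst A w j * v j) - snd A w
      \<and> (\<Sum>j<m. fst A v j * v j) - snd A v \<ge> 0)"

definition REV :: "mechanism \<Rightarrow> valuation measure \<Rightarrow> ennreal" where
  "REV A F = (\<integral>\<^sup>+ v. ennreal (snd A v) \<partial>F)"

definition OPT :: "nat \<Rightarrow> valuation measure \<Rightarrow> ennreal" where
  "OPT m F = (SUP A \<in> {A. is_mechanism m A \<and> truthful m A}. REV A F)"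

definition ratio :: "ennreal \<Rightarrow> ennreal \<Rightarrow> ennreal" where
  "ratio a b = (if b = 0 then \<infinity> else a / b)"

definition marginal_ok :: "real measure \<Rightarrow> real \<Rightarrow> real \<Rightarrow> bool" where
  "marginal_ok M \<mu> \<sigma> \<longleftrightarrow>
     prob_space M \<and> sets M = sets borel \<and> (AE x in M. 0 \<le> x)
     \<and> integrable M (\<lambda>x. x) \<and> integrable M (\<lambda>x. x\<^sup>2)
     \<and> (\<integral>x. x \<partial>M) = \<mu> \<and> (\<integral>x. (x - \<mu>)\<^sup>2 \<partial>M) \<le> \<sigma>\<^sup>2"

definition dist_class :: "nat \<Rightarrow> (nat \<Rightarrow> real) \<Rightarrow> (nat \<Rightarrow> real) \<Rightarrow> valuation measure set" where
  "dist_class m \<mu> \<sigma> = {F. prob_space F \<and> sets F = sets (Pi\<^sub>M {..<m} (\<lambda>_. borel))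
       \<and> (AE v in F. v \<in> valdom m)
       \<and> (\<forall>j<m. marginal_ok (distr F borel (\<lambda>v. v j)) (\<mu> j) (\<sigma> j))}"

definition APX :: "nat \<Rightarrow> (nat \<Rightarrow> real) \<Rightarrow> (nat \<Rightarrow> real) \<Rightarrow> ennreal" where
  "APX m \<mu> \<sigma> = (INF A \<in> {A. is_mechanism m A \<and> truthful m A}.
                   SUP F \<in> dist_class m \<mu> \<sigma>. ratio (OPT m F) (REV A F))"

end

theory Submission
  imports Defs "HOL-Real_Asymp.Real_Asymp"
begin

(* Give the item js with the largest ratio r = r js mean 1 and every other item a tiny
  deterministic value d. For 1 <= t <= 1 + r^2 the law "t with probability 1/t, else 0" has
  mean 1 and variance t - 1, and posting price t on item js earns 1, so OPT >= 1.
  Against a fixed truthful mechanism, look at the valuations with value b^k on item js,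
  k = 0..N, where b^N = 1 + r^2. If, up to O(m d) terms, the mechanism charged more than
  kappa b^k at every one of them, with 1/kappa = 1 + N (1 - 1/b), then incentive
  compatibility between neighbouring grid points would force the buyer's utility at b^k to be
  at least kappa k (1 - 1/b) b^k, and the allocation at b^N would exceed 1. So at some
  t = b^k the revenue is at most kappa + O(m d), while N (1 - 1/b) tends to ln (1 + r^2) as
  N grows. *)

lemma (in prob_space) nn_integral_two_atoms:
  assumes "a \<noteq> b" "{a} \<in> events" "{b} \<in> events" "emeasure M {a} + emeasure M {b} = 1"
  shows "(\<integral>\<^sup>+x. f x \<partial>M) = f a * emeasure M {a} + f b * emeasure M {b}"
proof -
  have "{a} \<union> {b} = {a, b}" by auto
  then have "emeasure M {a, b} = 1"
    using assms plus_emeasure[of "{a}" M "{b}"] by simp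
  then have "AE x in M. x \<in> {a, b}"
    by (intro AE_prob_1) (simp add: emeasure_eq_measure)
  then have "AE x in M. f x = f a * indicator {a} x + f b * indicator {b} x"
    by eventually_elim (use assms(1) in auto)
  then have "(\<integral>\<^sup>+x. f x \<partial>M) = (\<integral>\<^sup>+x. f a * indicator {a} x + f b * indicator {b} x \<partial>M)"
    by (rule nn_integral_cong_AE)
  also have "\<dots> = f a * emeasure M {a} + f b * emeasure M {b}"
    using assms(2,3) by (simp add: nn_integral_add)
  finally show ?thesis .
qed

lemma emeasure_PiM_singleton:
  assumes "finite I" "\<And>i. sigma_finite_measure (M i)" "x \<in> extensional I"
    and "\<And>i. i \<in> I \<Longrightarrow> {x i} \<in> sets (M i)"
  shows "{x} \<in> sets (Pi\<^sub>M I M)" "emeasure (Pi\<^sub>M I M) {x} = (\<Prod>i\<in>I. emeasure (M i) {x i})"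
proof -
  interpret product_sigma_finite M
    using assms(2) by (simp add: product_sigma_finite_def)
  have "{x} = PiE I (\<lambda>i. {x i})"
    using assms(3) by (simp add: PiE_singleton)
  then show "{x} \<in> sets (Pi\<^sub>M I M)" "emeasure (Pi\<^sub>M I M) {x} = (\<Prod>i\<in>I. emeasure (M i) {x i})"
    using assms by (auto intro!: sets_PiM_I_finite emeasure_PiM)
qed

definition two_point :: "real \<Rightarrow> real measure" where
  "two_point t = distr (measure_pmf (bernoulli_pmf (1/t))) borel (\<lambda>b. if b then t else 0)"

lemma prob_space_two_point: "prob_space (two_point t)"
  unfolding two_point_def by (intro prob_space.prob_space_distr) (auto simp: prob_space_measure_pmf)

lemma sets_two_point [simp]: "sets (two_point t) = sets borel"
  by (simp add: two_point_def)

lemma integrable_two_point: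
  fixes f :: "real \<Rightarrow> real"
  assumes "f \<in> borel_measurable borel"
  shows "integrable (two_point t) f"
proof -
  have "integrable (measure_pmf (bernoulli_pmf (1/t))) (\<lambda>b. f (if b then t else 0))"
    by (rule integrable_measure_pmf_finite) simp
  then show ?thesis
    unfolding two_point_def using assms by (subst integrable_distr_eq) auto
qed

lemma integral_two_point:
  assumes "1 \<le> t" "f \<in> borel_measurable borel"
  shows "(\<integral>x. f x \<partial>two_point t) = f t / t + f 0 * (1 - 1/t)"
  unfolding two_point_def using assms by (subst integral_distr) auto

lemma emeasure_two_point:
  assumes "1 \<le> t"
  shows "emeasure (two_point t) {t} = ennreal (1/t)"
    and "emeasure (two_point t) {0} = ennreal (1 - 1/t)"
proof -
  have "(\<lambda>b. if b then t else 0) -` {t} = {True}" "(\<lambda>b. if b then t else 0) -` {0} = {False}"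
    using assms by (auto split: if_splits)
  then show "emeasure (two_point t) {t} = ennreal (1/t)" "emeasure (two_point t) {0} = ennreal (1 - 1/t)"
    unfolding two_point_def using assms by (simp_all add: emeasure_distr emeasure_pmf_single)
qed

lemma marginal_ok_two_point:
  assumes "1 \<le> t" "t - 1 \<le> \<sigma>\<^sup>2"
  shows "marginal_ok (two_point t) 1 \<sigma>"
proof -
  have "AE x in two_point t. 0 \<le> x"
    unfolding two_point_def using assms by (subst AE_distr_iff) auto
  moreover have "(t - 1)\<^sup>2 / t + (0 - 1)\<^sup>2 * (1 - 1/t) = t - 1"
    using assms by (simp add: field_simps power2_eq_square)
  ultimately show ?thesis
    unfolding marginal_ok_def using assms
    by (simp add: prob_space_two_point integrable_two_point integral_two_point)
qed

lemma marginal_ok_return: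
  assumes "0 \<le> d"
  shows "marginal_ok (return borel d) d \<sigma>"
proof -
  interpret prob_space "return borel d" by (rule prob_space_return) simp
  have integrable_return: "integrable (return borel d) f" if "f \<in> borel_measurable borel" for f :: "real \<Rightarrow> real"
    using that by (intro integrable_const_bound[where B = "\<bar>f d\<bar>"]) (simp_all add: AE_return)
  have "integrable (return borel d) (\<lambda>x. x)" "integrable (return borel d) (\<lambda>x. x\<^sup>2)"
    by (intro integrable_return; measurable)+
  moreover have "(\<integral>x. x \<partial>return borel d) = d" "(\<integral>x. (x - d)\<^sup>2 \<partial>return borel d) = 0"
    by (simp_all add: integral_return)
  moreover have "AE x in return borel d. 0 \<le> x"
    using assms by (simp add: AE_return)
  ultimately show ?thesis
    unfolding marginal_ok_def using prob_space_return[of d borel] by simp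
qed

lemma PiM_in_dist_class:
  assumes marg: "\<And>j. j < m \<Longrightarrow> marginal_ok (Fs j) (\<mu> j) (\<sigma> j)"
  shows "Pi\<^sub>M {..<m} Fs \<in> dist_class m \<mu> \<sigma>"
proof -
  have prob: "\<And>j. j < m \<Longrightarrow> prob_space (Fs j)"
    and sets: "\<And>j. j < m \<Longrightarrow> sets (Fs j) = sets borel"
    and nonneg: "\<And>j. j < m \<Longrightarrow> AE x in Fs j. 0 \<le> x"
    using marg by (auto simp: marginal_ok_def)
  have "space (Fs j) = UNIV" if "j < m" for j
    using sets[OF that] by (metis sets_eq_imp_space_eq space_borel)
  then have space: "space (Pi\<^sub>M {..<m} Fs) = PiE {..<m} (\<lambda>_. UNIV)"
    unfolding space_PiM by (intro PiE_cong) simp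
  have "AE v in Pi\<^sub>M {..<m} Fs. \<forall>j\<in>{..<m}. 0 \<le> v j"
    using prob nonneg by (intro eventually_ball_finite ballI AE_PiM_component) auto
  with AE_space have valdom: "AE v in Pi\<^sub>M {..<m} Fs. v \<in> valdom m"
    by eventually_elim (auto simp: space valdom_def PiE_iff)
  have marginal: "distr (Pi\<^sub>M {..<m} Fs) borel (\<lambda>v. v j) = Fs j" if "j < m" for j
  proof -
    have "distr (Pi\<^sub>M {..<m} Fs) borel (\<lambda>v. v j) = distr (Pi\<^sub>M {..<m} Fs) (Fs j) (\<lambda>v. v j)"
      using sets that by (intro distr_cong) auto
    also have "\<dots> = Fs j"
      using prob that by (intro distr_PiM_component) auto
    finally show ?thesis .
  qed
  have "prob_space (Pi\<^sub>M {..<m} Fs)"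
    using prob by (intro prob_space_PiM) auto
  moreover have "sets (Pi\<^sub>M {..<m} Fs) = sets (Pi\<^sub>M {..<m} (\<lambda>_. borel))"
    using sets by (intro sets_PiM_cong) auto
  ultimately show ?thesis
    unfolding dist_class_def using valdom marginal marg by auto
qed

definition spike_marginals :: "nat \<Rightarrow> real \<Rightarrow> real \<Rightarrow> nat \<Rightarrow> real measure" where
  "spike_marginals js t d j = (if j = js then two_point t else return borel d)"

definition spike :: "nat \<Rightarrow> nat \<Rightarrow> real \<Rightarrow> real \<Rightarrow> valuation" where
  "spike m js d s = restrict ((\<lambda>_. d)(js := s)) {..<m}"

lemma spike_in_valdom: "0 \<le> d \<Longrightarrow> 0 \<le> s \<Longrightarrow> spike m js d s \<in> valdom m"
  by (simp add: spike_def valdom_def)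

lemma sum_spike:
  assumes "js < m"
  shows "(\<Sum>j<m. c j * spike m js d s j) = c js * s + (\<Sum>j\<in>{..<m} - {js}. c j) * d"
proof -
  have "(\<Sum>j<m. c j * spike m js d s j) = c js * s + (\<Sum>j\<in>{..<m} - {js}. c j * d)"
    using assms by (simp add: spike_def sum.remove[of _ js])
  then show ?thesis by (simp add: sum_distrib_right)
qed

lemma nn_integral_spike_product:
  assumes "js < m" "1 \<le> t"
  shows "(\<integral>\<^sup>+v. f v \<partial>Pi\<^sub>M {..<m} (spike_marginals js t d))
           = f (spike m js d 0) * ennreal (1 - 1/t) + f (spike m js d t) * ennreal (1/t)"
proof -
  let ?P = "Pi\<^sub>M {..<m} (spike_marginals js t d)"
  have prob: "prob_space (spike_marginals js t d j)" for j
    by (simp add: spike_marginals_def prob_space_two_point prob_space_return)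
  interpret prob_space ?P
    using prob by (rule prob_space_PiM)
  have atom: "{spike m js d s} \<in> events \<and> emeasure ?P {spike m js d s} = emeasure (two_point t) {s}"
    for s
  proof -
    have hyps: "finite {..<m}" "\<And>j. sigma_finite_measure (spike_marginals js t d j)"
      "spike m js d s \<in> extensional {..<m}"
      "\<And>j. j \<in> {..<m} \<Longrightarrow> {spike m js d s j} \<in> sets (spike_marginals js t d j)"
      using prob by (auto simp: spike_def spike_marginals_def prob_space_imp_sigma_finite)
    have "(\<Prod>j\<in>{..<m}. emeasure (spike_marginals js t d j) {spike m js d s j})
            = emeasure (two_point t) {s}"
      using assms(1) by (simp add: prod.remove[of _ js] spike_def spike_marginals_def)
    then show ?thesis
      using emeasure_PiM_singleton[OF hyps] by simp
  qed
  have "spike m js d 0 \<noteq> spike m js d t"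
    using assms by (auto simp: spike_def fun_eq_iff)
  moreover have "emeasure (two_point t) {0} + emeasure (two_point t) {t} = 1"
    using assms(2) by (simp add: emeasure_two_point flip: ennreal_plus)
  ultimately show ?thesis
    using atom by (simp add: nn_integral_two_atoms emeasure_two_point assms(2))
qed

definition posted_price :: "nat \<Rightarrow> real \<Rightarrow> mechanism" where
  "posted_price js t =
     ((\<lambda>v j. if j = js \<and> t \<le> v js then 1 else 0), (\<lambda>v. if t \<le> v js then t else 0))"

lemma posted_price_truthful:
  assumes "js < m" "0 \<le> t"
  shows "is_mechanism m (posted_price js t)" "truthful m (posted_price js t)"
proof -
  have "(\<lambda>v. if t \<le> v js then t else 0) \<in> borel_measurable (Pi\<^sub>M {..<m} (\<lambda>_. borel))"
    by measurable (simp add: assms(1))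
  then show "is_mechanism m (posted_price js t)"
    unfolding is_mechanism_def using assms by (simp add: posted_price_def)
  have payoff: "(\<Sum>j<m. fst (posted_price js t) w j * v j) = (if t \<le> w js then v js else 0)" for v w
    using assms(1) by (simp add: posted_price_def if_distrib[of "\<lambda>x. x * _"] sum.If_cases)
  have "0 \<le> v js" if "v \<in> valdom m" for v
    using that assms(1) by (auto simp: valdom_def)
  then show "truthful m (posted_price js t)"
    unfolding truthful_def payoff using assms(2) by (simp add: posted_price_def)
qed

lemma OPT_spike_product_ge_1:
  assumes "js < m" "1 \<le> t"
  shows "1 \<le> OPT m (Pi\<^sub>M {..<m} (spike_marginals js t d))"
proof -
  have "REV (posted_price js t) (Pi\<^sub>M {..<m} (spike_marginals js t d)) = 1"
    unfolding REV_def using assms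
    by (simp add: nn_integral_spike_product posted_price_def spike_def flip: ennreal_mult)
  moreover have "REV (posted_price js t) (Pi\<^sub>M {..<m} (spike_marginals js t d))
                   \<le> OPT m (Pi\<^sub>M {..<m} (spike_marginals js t d))"
    unfolding OPT_def using posted_price_truthful[OF assms(1)] assms(2) by (intro SUP_upper) auto
  ultimately show ?thesis by simp
qed

lemma grid_payment_le:
  fixes U X p :: "nat \<Rightarrow> real"
  assumes b: "1 < b" and U0: "0 \<le> U 0"
    and IC: "\<And>k. k < N \<Longrightarrow> U k + X k * (b ^ Suc k - b ^ k) \<le> U (Suc k)"
    and pay: "\<And>k. k \<le> N \<Longrightarrow> p k \<le> b ^ k * X k - U k"
    and XN: "X N \<le> 1"
  shows "\<exists>k\<le>N. p k \<le> b ^ k / (1 + N * (1 - 1/b))"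
proof (rule ccontr)
  define \<kappa> where "\<kappa> = 1 / (1 + N * (1 - 1/b))"
  have "0 \<le> N * (1 - 1/b)"
    using b by simp
  then have \<kappa>: "\<kappa> * (1 + N * (1 - 1/b)) = 1"
    unfolding \<kappa>_def by simp
  have bk: "0 < b ^ k" for k
    using b by simp
  assume "\<not> ?thesis"
  then have "\<kappa> * b ^ k < p k" if "k \<le> N" for k
    using that unfolding \<kappa>_def by (metis not_le times_divide_eq_left mult_1)
  with pay have X: "\<kappa> * b ^ k + U k < X k * b ^ k" if "k \<le> N" for k
    using that by (smt (verit) mult.commute)
  have U: "\<kappa> * k * (1 - 1/b) * b ^ k \<le> U k" if "k \<le> N" for k
    using that
  proof (induction k)
    case 0
    then show ?case using U0 by simp
  next
    case (Suc k)
    have "(\<kappa> * b ^ k + U k) * (b - 1) \<le> X k * b ^ k * (b - 1)"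
      using X[of k] Suc.prems b by (intro mult_right_mono) auto
    moreover have "U k + X k * b ^ k * (b - 1) \<le> U (Suc k)"
      using IC[of k] Suc.prems by (simp add: algebra_simps)
    moreover have "\<kappa> * k * (1 - 1/b) * b ^ k * b \<le> U k * b"
      using Suc b by (intro mult_right_mono) auto
    ultimately have "\<kappa> * k * (1 - 1/b) * b ^ k * b + \<kappa> * b ^ k * (b - 1) \<le> U (Suc k)"
      by (simp add: algebra_simps)
    moreover have "\<kappa> * real (Suc k) * (1 - 1/b) * b ^ Suc k
                     = \<kappa> * k * (1 - 1/b) * b ^ k * b + \<kappa> * b ^ k * (b - 1)"
      using b by (simp add: field_simps)
    ultimately show ?case by simp
  qed
  have "\<kappa> * (1 + N * (1 - 1/b)) * b ^ N < X N * b ^ N"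
    using X[of N] U[of N] by (simp add: algebra_simps)
  then have "\<kappa> * (1 + N * (1 - 1/b)) < X N"
    using bk[of N] mult_less_cancel_right_pos by blast
  with \<kappa> XN show False by simp
qed

lemma allocation_sum_le:
  assumes "is_mechanism m A" "w \<in> valdom m" "J \<subseteq> {..<m}"
  shows "(\<Sum>j\<in>J. fst A w j) \<le> m"
proof -
  have "fst A w j \<le> 1" if "j \<in> J" for j
    using assms that by (auto simp: is_mechanism_def)
  moreover have "finite J" "card J \<le> m"
    using assms(3) by (auto intro: finite_subset dest: card_mono[OF finite_lessThan])
  ultimately show ?thesis
    using sum_bounded_above[of J "fst A w" 1] by force
qed

definition spike_utility :: "mechanism \<Rightarrow> nat \<Rightarrow> nat \<Rightarrow> real \<Rightarrow> real \<Rightarrow> valuation \<Rightarrow> real" where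
  "spike_utility A m js d s w = fst A w js * s + (\<Sum>j\<in>{..<m} - {js}. fst A w j) * d - snd A w"

lemma truthful_spike_utility:
  assumes "truthful m A" "js < m" "0 \<le> d" "0 \<le> s"
  shows "w \<in> valdom m \<Longrightarrow> spike_utility A m js d s w \<le> spike_utility A m js d s (spike m js d s)"
    and "0 \<le> spike_utility A m js d s (spike m js d s)"
proof -
  let ?v = "spike m js d s"
  have payoff: "(\<Sum>j<m. fst A w j * ?v j) - snd A w = spike_utility A m js d s w" for w
    unfolding spike_utility_def using sum_spike[OF assms(2)] by simp
  have v: "?v \<in> valdom m"
    using assms(3,4) by (rule spike_in_valdom)
  show "spike_utility A m js d s w \<le> spike_utility A m js d s ?v" if "w \<in> valdom m"
  proof -
    have "(\<Sum>j<m. fst A w j * ?v j) - snd A w \<le> (\<Sum>j<m. fst A ?v j * ?v j) - snd A ?v"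
      using assms(1) v that unfolding truthful_def by blast
    then show ?thesis by (simp only: payoff)
  qed
  have "0 \<le> (\<Sum>j<m. fst A ?v j * ?v j) - snd A ?v"
    using assms(1) v unfolding truthful_def by blast
  then show "0 \<le> spike_utility A m js d s ?v" by (simp only: payoff)
qed

lemma truthful_payment_on_spikes:
  assumes A: "is_mechanism m A" "truthful m A" and js: "js < m" and d: "0 \<le> d" and b: "1 < b"
  shows "snd A (spike m js d 0) \<le> m * d"
    and "\<exists>k\<le>N. snd A (spike m js d (b ^ k)) \<le> (1 / (1 + N * (1 - 1/b)) + m * d) * b ^ k"
proof -
  let ?u = "spike_utility A m js d"
  have rest: "(\<Sum>j\<in>{..<m} - {js}. fst A w j) * d \<le> m * d" if "w \<in> valdom m" for w
    using allocation_sum_le[OF A(1) that, of "{..<m} - {js}"] d by (simp add: mult_right_mono)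
  have "0 \<le> ?u 0 (spike m js d 0)"
    using truthful_spike_utility(2)[OF A(2) js d] by simp
  then show "snd A (spike m js d 0) \<le> m * d"
    using rest[of "spike m js d 0"] spike_in_valdom[OF d order.refl] by (simp add: spike_utility_def)
  define w where "w k = spike m js d (b ^ k)" for k
  have w: "w k \<in> valdom m" for k
    unfolding w_def using b d by (intro spike_in_valdom) simp_all
  have "\<exists>k\<le>N. snd A (w k) - m * d * b ^ k \<le> b ^ k / (1 + N * (1 - 1/b))"
  proof (rule grid_payment_le[OF b, where U = "\<lambda>k. ?u (b ^ k) (w k)" and X = "\<lambda>k. fst A (w k) js"])
    show "0 \<le> ?u (b ^ 0) (w 0)"
      unfolding w_def using truthful_spike_utility(2)[OF A(2) js d] by simp
  next
    fix k
    have "?u (b ^ Suc k) (w k) \<le> ?u (b ^ Suc k) (w (Suc k))"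
      unfolding w_def using truthful_spike_utility(1)[OF A(2) js d _ w] b by (simp add: w_def)
    then show "?u (b ^ k) (w k) + fst A (w k) js * (b ^ Suc k - b ^ k) \<le> ?u (b ^ Suc k) (w (Suc k))"
      by (simp add: spike_utility_def algebra_simps)
  next
    fix k
    have "m * d \<le> m * d * b ^ k"
      using mult_left_mono[of 1 "b ^ k" "m * d"] b d by simp
    then show "snd A (w k) - m * d * b ^ k \<le> b ^ k * fst A (w k) js - ?u (b ^ k) (w k)"
      using rest[OF w, of k] by (simp add: spike_utility_def algebra_simps)
  next
    show "fst A (w N) js \<le> 1"
      using A(1) w js by (auto simp: is_mechanism_def)
  qed
  then show "\<exists>k\<le>N. snd A (spike m js d (b ^ k)) \<le> (1 / (1 + N * (1 - 1/b)) + m * d) * b ^ k"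
    unfolding w_def by (simp add: algebra_simps)
qed

lemma REV_spike_product_le:
  fixes N :: nat
  assumes A: "is_mechanism m A" "truthful m A" and js: "js < m" and d: "0 \<le> d" and b: "1 < b"
  shows "\<exists>k\<le>N. REV A (Pi\<^sub>M {..<m} (spike_marginals js (b ^ k) d))
                 \<le> ennreal (1 / (1 + N * (1 - 1/b)) + 2 * real m * d)"
proof -
  define \<kappa> where "\<kappa> = 1 / (1 + N * (1 - 1/b))"
  obtain k where "k \<le> N" and high: "snd A (spike m js d (b ^ k)) \<le> (\<kappa> + m * d) * b ^ k"
    using truthful_payment_on_spikes(2)[OF A js d b] unfolding \<kappa>_def by blast
  have low: "snd A (spike m js d 0) \<le> m * d"
    using truthful_payment_on_spikes(1)[OF A js d b] .
  define t where "t = b ^ k"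
  have t: "1 \<le> t"
    unfolding t_def using b by simp
  have pay_nonneg: "0 \<le> snd A (spike m js d s)" if "0 \<le> s" for s
    using A(1) spike_in_valdom[OF d that] by (auto simp: is_mechanism_def)
  have "REV A (Pi\<^sub>M {..<m} (spike_marginals js t d))
          = ennreal (snd A (spike m js d 0)) * ennreal (1 - 1/t) + ennreal (snd A (spike m js d t)) * ennreal (1/t)"
    unfolding REV_def using js t by (rule nn_integral_spike_product)
  also have "\<dots> = ennreal (snd A (spike m js d 0) * (1 - 1/t) + snd A (spike m js d t) * (1/t))"
    using t pay_nonneg[of 0] pay_nonneg[of t]
    by (simp add: ennreal_mult[symmetric] ennreal_plus[symmetric] del: ennreal_plus)
  also have "\<dots> \<le> ennreal (\<kappa> + 2 * real m * d)"
  proof (rule ennreal_leI)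
    have "snd A (spike m js d 0) * (1 - 1/t) \<le> m * d"
      using low pay_nonneg[of 0] t mult_left_le[of "1 - 1/t" "snd A (spike m js d 0)"] by simp
    moreover have "snd A (spike m js d t) * (1/t) \<le> \<kappa> + m * d"
      using high t unfolding t_def by (simp add: pos_divide_le_eq)
    ultimately show "snd A (spike m js d 0) * (1 - 1/t) + snd A (spike m js d t) * (1/t) \<le> \<kappa> + 2 * real m * d"
      by simp
  qed
  finally show ?thesis
    using \<open>k \<le> N\<close> unfolding t_def \<kappa>_def by (intro exI[of _ k]) simp
qed

lemma ennreal_le_ratio:
  assumes "1 \<le> a" "b \<le> ennreal c" "0 \<le> c" "T * c \<le> 1"
  shows "ennreal T \<le> ratio a b"
proof (cases "T \<le> 0 \<or> b = 0")
  case True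
  then show ?thesis by (auto simp: ratio_def ennreal_neg)
next
  case False
  then have "b \<noteq> 0" "b < \<top>" "0 < T"
    using assms(2) by (auto simp: order.strict_trans1)
  have "ennreal T * b \<le> ennreal (T * c)"
    using assms(2,3) \<open>0 < T\<close> by (simp add: ennreal_mult mult_left_mono)
  also have "\<dots> \<le> a"
    using assms(1,4) by (metis ennreal_le_1 order.trans)
  finally have "\<not> a / b < ennreal T"
    using divide_less_ennreal[OF \<open>b \<noteq> 0\<close> \<open>b < \<top>\<close>] by (simp add: not_less)
  then show ?thesis
    using \<open>b \<noteq> 0\<close> by (simp add: ratio_def not_less)
qed

lemma exists_slack:
  fixes T c :: real
  assumes "T < c" "0 < c"
  shows "\<exists>\<delta>>0. T * (1/c + \<delta>) \<le> 1"
proof (cases "T \<le> 0")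
  case True
  then show ?thesis
    using assms(2) mult_nonpos_nonneg[of T "1/c + 1"] by (intro exI[of _ 1]) simp
next
  case False
  then show ?thesis
    using assms by (intro exI[of _ "1/T - 1/c"]) (simp add: frac_less2)
qed

lemma grid_size_and_slack:
  fixes H \<epsilon> :: real
  assumes "1 < H" "0 < \<epsilon>"
  obtains N :: nat and b \<delta> where "1 < b" "b ^ N = H" "0 < \<delta>"
    "(1 - \<epsilon> + ln H) * (1 / (1 + N * (1 - 1/b)) + \<delta>) \<le> 1"
proof -
  define L where "L = ln H"
  have "0 < L"
    using assms(1) by (simp add: L_def)
  then have "(\<lambda>N. real N * (1 - 1 / exp (L / real N))) \<longlonglongrightarrow> L"
    by real_asymp
  then have "eventually (\<lambda>N. L - \<epsilon> < real N * (1 - 1 / exp (L / real N)) \<and> 1 \<le> N) sequentially"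
    using assms(2) by (intro eventually_conj order_tendstoD(1) eventually_ge_at_top) auto
  then obtain N :: nat where N: "L - \<epsilon> < N * (1 - 1 / exp (L/N))" "1 \<le> N"
    unfolding eventually_sequentially by blast
  define b where "b = exp (L/N)"
  have "1 < b"
    using \<open>0 < L\<close> N(2) by (simp add: b_def)
  have "b ^ N = H"
    using N(2) assms(1) by (simp add: b_def L_def exp_of_nat_mult[symmetric])
  have "0 \<le> 1 - 1/b"
    using \<open>1 < b\<close> by simp
  then have "0 < 1 + N * (1 - 1/b)"
    by (simp add: add_pos_nonneg)
  moreover have "1 - \<epsilon> + L < 1 + N * (1 - 1/b)"
    using N(1) by (simp add: b_def)
  ultimately obtain \<delta> where "0 < \<delta>" "(1 - \<epsilon> + L) * (1 / (1 + N * (1 - 1/b)) + \<delta>) \<le> 1"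
    using exists_slack by blast
  with \<open>1 < b\<close> \<open>b ^ N = H\<close> show thesis
    unfolding L_def by (rule that)
qed

lemma exists_spike_product_witness:
  fixes N :: nat
  assumes A: "is_mechanism m A" "truthful m A" and js: "js < m" and d: "0 \<le> d" and b: "1 < b"
    and \<mu>: "\<mu> js = 1" "\<And>j. j \<noteq> js \<Longrightarrow> \<mu> j = d" and \<sigma>: "b ^ N - 1 \<le> (\<sigma> js)\<^sup>2"
    and slack: "T * (1 / (1 + N * (1 - 1/b)) + 2 * real m * d) \<le> 1"
  shows "\<exists>Fs. (\<forall>j<m. marginal_ok (Fs j) (\<mu> j) (\<sigma> j))
               \<and> ennreal T \<le> ratio (OPT m (Pi\<^sub>M {..<m} Fs)) (REV A (Pi\<^sub>M {..<m} Fs))"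
proof -
  obtain k where "k \<le> N" and REV: "REV A (Pi\<^sub>M {..<m} (spike_marginals js (b ^ k) d))
                                       \<le> ennreal (1 / (1 + N * (1 - 1/b)) + 2 * real m * d)"
    using REV_spike_product_le[OF A js d b] by blast
  have "1 \<le> b ^ k"
    using b by simp
  moreover have "b ^ k \<le> b ^ N"
    using b \<open>k \<le> N\<close> by (intro power_increasing) auto
  ultimately have "\<forall>j<m. marginal_ok (spike_marginals js (b ^ k) d j) (\<mu> j) (\<sigma> j)"
    using \<mu> \<sigma> d by (auto simp: spike_marginals_def intro: marginal_ok_two_point marginal_ok_return)
  moreover have "0 \<le> 1 / (1 + N * (1 - 1/b))"
    using b by simp
  then have "ennreal T \<le> ratio (OPT m (Pi\<^sub>M {..<m} (spike_marginals js (b ^ k) d)))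
                                 (REV A (Pi\<^sub>M {..<m} (spike_marginals js (b ^ k) d)))"
    using OPT_spike_product_ge_1[OF js \<open>1 \<le> b ^ k\<close>] REV slack d by (intro ennreal_le_ratio) auto
  ultimately show ?thesis by blast
qed

lemma APX_ge_of_product_witnesses:
  assumes "\<And>A. is_mechanism m A \<Longrightarrow> truthful m A \<Longrightarrow>
             \<exists>Fs. (\<forall>j<m. marginal_ok (Fs j) (\<mu> j) (\<sigma> j))
                  \<and> c \<le> ratio (OPT m (Pi\<^sub>M {..<m} Fs)) (REV A (Pi\<^sub>M {..<m} Fs))"
  shows "c \<le> APX m \<mu> \<sigma>"
  unfolding APX_def
proof (rule INF_greatest)
  fix A
  assume "A \<in> {A. is_mechanism m A \<and> truthful m A}"
  then obtain Fs where "\<forall>j<m. marginal_ok (Fs j) (\<mu> j) (\<sigma> j)"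
    and ratio: "c \<le> ratio (OPT m (Pi\<^sub>M {..<m} Fs)) (REV A (Pi\<^sub>M {..<m} Fs))"
    using assms by blast
  then have "Pi\<^sub>M {..<m} Fs \<in> dist_class m \<mu> \<sigma>"
    by (intro PiM_in_dist_class) simp
  then show "c \<le> (SUP F\<in>dist_class m \<mu> \<sigma>. ratio (OPT m F) (REV A F))"
    using ratio by (rule SUP_upper2)
qed

theorem theorem5:
  fixes m :: nat and r :: "nat \<Rightarrow> real" and \<epsilon> :: real
  assumes "m \<ge> 1"
    and "\<forall>j<m. r j > 0"
    and "\<epsilon> > 0"
  shows "\<exists>\<mu> \<sigma> :: nat \<Rightarrow> real.
           (\<forall>j<m. \<mu> j > 0 \<and> \<sigma> j \<ge> 0 \<and> \<sigma> j / \<mu> j = r j)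
         \<and> (\<forall>A. is_mechanism m A \<and> truthful m A \<longrightarrow>
              (\<exists>Fs :: nat \<Rightarrow> real measure.
                 (\<forall>j<m. marginal_ok (Fs j) (\<mu> j) (\<sigma> j))
               \<and> ratio (OPT m (Pi\<^sub>M {..<m} Fs)) (REV A (Pi\<^sub>M {..<m} Fs))
                   \<ge> ennreal (1 - \<epsilon> + ln (1 + (Max (r ` {..<m}))\<^sup>2))))
         \<and> APX m \<mu> \<sigma> \<ge> ennreal (1 - \<epsilon> + ln (1 + (Max (r ` {..<m}))\<^sup>2))"
proof -
  have "0 \<in> {..<m}"
    using assms(1) by simp
  then have "Max (r ` {..<m}) \<in> r ` {..<m}"
    by (intro Max_in) auto
  then obtain js where js: "js < m" "Max (r ` {..<m}) = r js"
    by auto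
  have "0 < r js"
    using assms(2) js(1) by blast
  then have "1 < 1 + (r js)\<^sup>2"
    by simp
  then obtain N :: nat and b \<delta> where "1 < b" "b ^ N = 1 + (r js)\<^sup>2" "0 < \<delta>"
    and slack: "(1 - \<epsilon> + ln (1 + (r js)\<^sup>2)) * (1 / (1 + N * (1 - 1/b)) + \<delta>) \<le> 1"
    using grid_size_and_slack[OF _ assms(3)] by blast
  define d where "d = \<delta> / (2 * m)"
  define \<mu> where "\<mu> j = (if j = js then 1 else d)" for j
  define \<sigma> where "\<sigma> j = r j * \<mu> j" for j
  have "0 < d" "2 * real m * d = \<delta>"
    using \<open>0 < \<delta>\<close> assms(1) by (simp_all add: d_def)
  have witness: "\<exists>Fs. (\<forall>j<m. marginal_ok (Fs j) (\<mu> j) (\<sigma> j))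
      \<and> ennreal (1 - \<epsilon> + ln (1 + (r js)\<^sup>2)) \<le> ratio (OPT m (Pi\<^sub>M {..<m} Fs)) (REV A (Pi\<^sub>M {..<m} Fs))"
    if "is_mechanism m A" "truthful m A" for A
    using \<open>1 < b\<close> \<open>b ^ N = 1 + (r js)\<^sup>2\<close> \<open>0 < d\<close> slack \<open>2 * real m * d = \<delta>\<close>
    by (intro exists_spike_product_witness[OF that js(1)]) (auto simp: \<mu>_def \<sigma>_def)
  have "\<forall>j<m. 0 < \<mu> j \<and> 0 \<le> \<sigma> j \<and> \<sigma> j / \<mu> j = r j"
    using assms(2) \<open>0 < d\<close> by (auto simp: \<mu>_def \<sigma>_def less_imp_le)
  with witness APX_ge_of_product_witnesses[OF witness] show ?thesis
    unfolding js(2) by blast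
qed

end
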